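(* The order-preserving map $\psi:T_K(V)\to T_{O_K}(\Lambda)$, $W\mapsto W\cap\Lambda$, induces a homotopy equivalence of the order complexes (geometric realizations) $T_K(V)^\bullet\simeq T_{O_K}(\Lambda)^\bullet$.
   Context: $K$ finite over $\mathbb Q_p$, $O_K$ its integers, $\pi$ a uniformizer, $V=K^{d+1}$, $\Lambda=\bigoplus_{i=0}^dO_Ke_i$. $T_K(V)$ is the poset (under inclusion) of $K$-subspaces $0\neq W\subsetneq V$ (the Tits building of $\mathrm{GL}(V)$). $T_{O_K}(\Lambda)$ is the poset (under inclusion) of $O_K$-submodules $U\subset\Lambda$ with $U\not\subset\pi\Lambda$ (i.e. $\dim_{O_K/\pi}(U+\pi\Lambda)/\pi\Lambda\ge1$) which can be generated by at most $d$ elements. For a poset $X$, the order complex $X^\bullet$ has as $n$-simplices chains $x_0\prec\cdots\prec x_n$. *)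

theory Defs
  imports "HOL-Analysis.Analysis"
begin

text \<open>A normalized discrete valuation on a field (the value at 0 is irrelevant).\<close>
definition normalized_discrete_valuation :: "('k::field \<Rightarrow> int) \<Rightarrow> bool" where
  "normalized_discrete_valuation v \<longleftrightarrow>
     (\<forall>x y. x \<noteq> 0 \<longrightarrow> y \<noteq> 0 \<longrightarrow> v (x * y) = v x + v y) \<and>
     (\<forall>x y. x \<noteq> 0 \<longrightarrow> y \<noteq> 0 \<longrightarrow> x + y \<noteq> 0 \<longrightarrow> min (v x) (v y) \<le> v (x + y)) \<and>
     (\<forall>n. \<exists>x. x \<noteq> 0 \<and> v x = n)"

text \<open>x lies in pi^n OK (i.e. has valuation at least n).\<close>
definition val_ge :: "('k::field \<Rightarrow> int) \<Rightarrow> int \<Rightarrow> 'k \<Rightarrow> bool" where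
  "val_ge v n x \<longleftrightarrow> x = 0 \<or> n \<le> v x"

definition valuation_ring :: "('k::field \<Rightarrow> int) \<Rightarrow> 'k set" where
  "valuation_ring v = {x. val_ge v 0 x}"

text \<open>K is complete, discretely valued, with finite residue field; together with
  characteristic 0 this characterises the finite extensions of Q_p.\<close>
definition p_adic_local_field :: "('k::field_char_0 \<Rightarrow> int) \<Rightarrow> bool" where
  "p_adic_local_field v \<longleftrightarrow>
     normalized_discrete_valuation v \<and>
     (\<exists>R. finite R \<and> R \<subseteq> valuation_ring v \<and>
          (\<forall>x\<in>valuation_ring v. \<exists>r\<in>R. val_ge v 1 (x - r))) \<and>
     (\<forall>s::nat \<Rightarrow> 'k. (\<forall>N. \<exists>M. \<forall>m\<ge>M. \<forall>n\<ge>M. val_ge v N (s m - s n)) \<longrightarrow>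
          (\<exists>L. \<forall>N. \<exists>M. \<forall>n\<ge>M. val_ge v N (s n - L)))"

text \<open>V = K^(d+1) is modelled as 'n \<Rightarrow> 'k with CARD('n) = d + 1.\<close>

definition vscale :: "'k::field \<Rightarrow> ('n \<Rightarrow> 'k) \<Rightarrow> ('n \<Rightarrow> 'k)" where
  "vscale c x = (\<lambda>i. c * x i)"

definition vadd :: "('n \<Rightarrow> 'k::field) \<Rightarrow> ('n \<Rightarrow> 'k) \<Rightarrow> ('n \<Rightarrow> 'k)" where
  "vadd x y = (\<lambda>i. x i + y i)"

definition vzero :: "'n \<Rightarrow> 'k::field" where
  "vzero = (\<lambda>i. 0)"

definition is_K_subspace :: "('n \<Rightarrow> 'k::field) set \<Rightarrow> bool" where
  "is_K_subspace W \<longleftrightarrow> vzero \<in> W \<and> (\<forall>x\<in>W. \<forall>y\<in>W. vadd x y \<in> W) \<and>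
      (\<forall>c. \<forall>x\<in>W. vscale c x \<in> W)"

definition tits_building :: "('n::finite \<Rightarrow> 'k::field) set set" where
  "tits_building = {W. is_K_subspace W \<and> W \<noteq> {vzero} \<and> W \<noteq> UNIV}"

definition std_lattice :: "'k::field set \<Rightarrow> ('n \<Rightarrow> 'k) set" where
  "std_lattice OK = {x. \<forall>i. x i \<in> OK}"

definition is_O_submodule :: "'k::field set \<Rightarrow> ('n \<Rightarrow> 'k) set \<Rightarrow> bool" where
  "is_O_submodule OK U \<longleftrightarrow> vzero \<in> U \<and> (\<forall>x\<in>U. \<forall>y\<in>U. vadd x y \<in> U) \<and>
      (\<forall>c\<in>OK. \<forall>x\<in>U. vscale c x \<in> U)"

definition O_span :: "'k::field set \<Rightarrow> ('n \<Rightarrow> 'k) list \<Rightarrow> ('n \<Rightarrow> 'k) set" where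
  "O_span OK gs = {(\<lambda>i. \<Sum>j<length gs. c j * (gs ! j) i) | c. \<forall>j<length gs. c j \<in> OK}"

definition lattice_poset :: "'k::field set \<Rightarrow> 'k \<Rightarrow> ('n::finite \<Rightarrow> 'k) set set" where
  "lattice_poset OK \<pi> = {U. is_O_submodule OK U \<and> U \<subseteq> std_lattice OK \<and>
       \<not> U \<subseteq> (vscale \<pi>) ` std_lattice OK \<and>
       (\<exists>gs. length gs \<le> CARD('n) - 1 \<and> U = O_span OK gs)}"

definition osupp :: "('a \<Rightarrow> real) \<Rightarrow> 'a set" where
  "osupp f = {x. f x \<noteq> 0}"

definition is_chain_in :: "('a \<Rightarrow> 'a \<Rightarrow> bool) \<Rightarrow> 'a set \<Rightarrow> bool" where
  "is_chain_in le S \<longleftrightarrow> (\<forall>x\<in>S. \<forall>y\<in>S. le x y \<or> le y x)"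

definition realization_carrier :: "'a set \<Rightarrow> ('a \<Rightarrow> 'a \<Rightarrow> bool) \<Rightarrow> ('a \<Rightarrow> real) set" where
  "realization_carrier P le = {f. finite (osupp f) \<and> osupp f \<subseteq> P \<and> is_chain_in le (osupp f) \<and>
       (\<forall>x. 0 \<le> f x) \<and> sum f (osupp f) = 1}"

definition closed_simplex :: "'a set \<Rightarrow> ('a \<Rightarrow> 'a \<Rightarrow> bool) \<Rightarrow> 'a set \<Rightarrow> ('a \<Rightarrow> real) set" where
  "closed_simplex P le \<sigma> = {f \<in> realization_carrier P le. osupp f \<subseteq> \<sigma>}"

text \<open>The weak (coherent) topology: U is open iff its trace on each closed simplex
  (a finite chain, with its Euclidean topology) is open.\<close>
definition order_complex :: "'a set \<Rightarrow> ('a \<Rightarrow> 'a \<Rightarrow> bool) \<Rightarrow> ('a \<Rightarrow> real) topology" where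
  "order_complex P le = topology (\<lambda>U. U \<subseteq> realization_carrier P le \<and>
      (\<forall>\<sigma>. finite \<sigma> \<and> \<sigma> \<subseteq> P \<and> is_chain_in le \<sigma> \<longrightarrow>
          openin (top_of_set (closed_simplex P le \<sigma>)) (U \<inter> closed_simplex P le \<sigma>)))"

definition realization_map :: "('a \<Rightarrow> 'b) \<Rightarrow> ('a \<Rightarrow> real) \<Rightarrow> ('b \<Rightarrow> real)" where
  "realization_map \<psi> f = (\<lambda>y. \<Sum>x\<in>{x\<in>osupp f. \<psi> x = y}. f x)"

end

theory Submission
  imports Defs
begin

text \<open>The map \<open>\<psi>\<close> has an order-preserving partner \<open>U \<mapsto> K U\<close> (\<open>K_span\<close>) in the other direction,
  and the two composites are comparable with the identity: \<open>K (W \<inter> \<Lambda>) = W\<close> because every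
  vector of \<open>W\<close> is a multiple of a vector of \<open>\<Lambda>\<close>, and \<open>U \<subseteq> K U \<inter> \<Lambda>\<close>. By Quillen's
  homotopy property, comparable order-preserving maps have homotopic realizations, so both
  composites of the realizations are homotopic to the identity.

  The algebra is needed only to see that the two maps land in the right posets. \<open>W \<inter> \<Lambda>\<close>
  is generated by \<open>dim W \<le> d\<close> vectors (row reduction over \<open>O\<^sub>K\<close>, pivoting at each step on a
  vector whose pivot coordinate has minimal valuation) and contains a vector with a coordinate
  equal to 1, so it is not contained in \<open>\<pi>\<Lambda>\<close>; conversely \<open>K U\<close> is a proper nonzero subspace
  since \<open>U\<close> has at most \<open>d\<close> generators and is not zero.\<close>

section \<open>The weak topology of an order complex\<close>

lemma istopology_order_complex:
  "istopology (\<lambda>U. U \<subseteq> realization_carrier P le \<and>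
      (\<forall>\<sigma>. finite \<sigma> \<and> \<sigma> \<subseteq> P \<and> is_chain_in le \<sigma> \<longrightarrow>
          openin (top_of_set (closed_simplex P le \<sigma>)) (U \<inter> closed_simplex P le \<sigma>)))"
  unfolding istopology_def
proof (intro conjI allI impI ballI)
  fix S T :: "('a \<Rightarrow> real) set"
  assume S: "S \<subseteq> realization_carrier P le \<and> (\<forall>\<sigma>. finite \<sigma> \<and> \<sigma> \<subseteq> P \<and> is_chain_in le \<sigma> \<longrightarrow>
            openin (top_of_set (closed_simplex P le \<sigma>)) (S \<inter> closed_simplex P le \<sigma>))"
    and T: "T \<subseteq> realization_carrier P le \<and> (\<forall>\<sigma>. finite \<sigma> \<and> \<sigma> \<subseteq> P \<and> is_chain_in le \<sigma> \<longrightarrow>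
            openin (top_of_set (closed_simplex P le \<sigma>)) (T \<inter> closed_simplex P le \<sigma>))"
  show "S \<inter> T \<subseteq> realization_carrier P le" using S by auto
  fix \<sigma> assume "finite \<sigma> \<and> \<sigma> \<subseteq> P \<and> is_chain_in le \<sigma>"
  then have "openin (top_of_set (closed_simplex P le \<sigma>))
               ((S \<inter> closed_simplex P le \<sigma>) \<inter> (T \<inter> closed_simplex P le \<sigma>))"
    using S T by (simp add: openin_Int)
  then show "openin (top_of_set (closed_simplex P le \<sigma>)) (S \<inter> T \<inter> closed_simplex P le \<sigma>)"
    by (simp add: Int_ac)
next
  fix \<K> :: "('a \<Rightarrow> real) set set"
  assume \<K>: "\<forall>S\<in>\<K>. S \<subseteq> realization_carrier P le \<and> (\<forall>\<sigma>. finite \<sigma> \<and> \<sigma> \<subseteq> P \<and> is_chain_in le \<sigma> \<longrightarrow>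
            openin (top_of_set (closed_simplex P le \<sigma>)) (S \<inter> closed_simplex P le \<sigma>))"
  show "\<Union>\<K> \<subseteq> realization_carrier P le" using \<K> by auto
  fix \<sigma> assume "finite \<sigma> \<and> \<sigma> \<subseteq> P \<and> is_chain_in le \<sigma>"
  then have "openin (top_of_set (closed_simplex P le \<sigma>)) (\<Union>S\<in>\<K>. S \<inter> closed_simplex P le \<sigma>)"
    using \<K> by (intro openin_Union) auto
  then show "openin (top_of_set (closed_simplex P le \<sigma>)) (\<Union>\<K> \<inter> closed_simplex P le \<sigma>)"
    by (simp only: Int_Union2)
qed

lemma openin_order_complex:
  "openin (order_complex P le) U \<longleftrightarrow> U \<subseteq> realization_carrier P le \<and>
      (\<forall>\<sigma>. finite \<sigma> \<and> \<sigma> \<subseteq> P \<and> is_chain_in le \<sigma> \<longrightarrow>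
          openin (top_of_set (closed_simplex P le \<sigma>)) (U \<inter> closed_simplex P le \<sigma>))"
  unfolding order_complex_def topology_inverse'[OF istopology_order_complex] ..

lemma closed_simplex_subset_carrier: "closed_simplex P le \<sigma> \<subseteq> realization_carrier P le"
  by (auto simp: closed_simplex_def)

lemma topspace_order_complex [simp]: "topspace (order_complex P le) = realization_carrier P le"
proof
  show "topspace (order_complex P le) \<subseteq> realization_carrier P le"
    using openin_topspace[of "order_complex P le"] unfolding openin_order_complex by blast
  have "openin (order_complex P le) (realization_carrier P le)"
    by (simp add: openin_order_complex Int_absorb1[OF closed_simplex_subset_carrier])
  then show "realization_carrier P le \<subseteq> topspace (order_complex P le)"
    by (rule openin_subset)
qed

lemma realization_carrierD:
  assumes "x \<in> realization_carrier P le"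
  shows "finite (osupp x)" "osupp x \<subseteq> P" "is_chain_in le (osupp x)" "0 \<le> x a"
    "sum x (osupp x) = 1"
  using assms by (auto simp: realization_carrier_def)

lemma closed_vanishing_on: "closed {f :: 'a \<Rightarrow> real. \<forall>y\<in>D. f y = 0}"
proof -
  have "closed {f :: 'a \<Rightarrow> real. f y = 0}" for y
    by (intro closed_Collect_eq continuous_on_const continuous_on_product_coordinates)
  then show ?thesis
    using closed_INT[of D "\<lambda>y. {f :: 'a \<Rightarrow> real. f y = 0}"] by (simp add: Collect_ball_eq)
qed

lemma closed_simplex_eq_vanishing:
  assumes "\<sigma> \<subseteq> C"
  shows "closed_simplex P le \<sigma> = closed_simplex P le C \<inter> {f. \<forall>y\<in>C - \<sigma>. f y = 0}"
  using assms by (auto simp: closed_simplex_def osupp_def)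

lemma closed_simplex_eq_Union_chains:
  "closed_simplex P le C =
     (\<Union>\<sigma>\<in>{\<sigma>. \<sigma> \<subseteq> C \<and> \<sigma> \<subseteq> P \<and> is_chain_in le \<sigma>}. closed_simplex P le \<sigma>)"
  by (auto simp: closed_simplex_def realization_carrier_def)

text \<open>For a finite vertex set \<open>C\<close> that need not be a chain, \<open>closed_simplex P le C\<close> is the
  subcomplex spanned by \<open>C\<close>, a finite union of closed simplices.\<close>
lemma openin_closed_simplex_Int:
  assumes C: "finite C" and U: "openin (order_complex P le) U"
  shows "openin (top_of_set (closed_simplex P le C)) (U \<inter> closed_simplex P le C)"
proof -
  let ?C = "closed_simplex P le C"
  let ?faces = "{\<sigma>. \<sigma> \<subseteq> C \<and> \<sigma> \<subseteq> P \<and> is_chain_in le \<sigma>}"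
  have closed_face: "closedin (top_of_set ?C) (closed_simplex P le \<sigma> - U)" if \<sigma>: "\<sigma> \<in> ?faces" for \<sigma>
  proof -
    have "finite \<sigma>" using \<sigma> C finite_subset by blast
    then have "openin (top_of_set (closed_simplex P le \<sigma>)) (U \<inter> closed_simplex P le \<sigma>)"
      using U \<sigma> unfolding openin_order_complex by blast
    then have "closedin (top_of_set (closed_simplex P le \<sigma>))
                 (topspace (top_of_set (closed_simplex P le \<sigma>)) - U \<inter> closed_simplex P le \<sigma>)"
      by (rule closedin_diff[OF closedin_topspace])
    then have "closedin (top_of_set (closed_simplex P le \<sigma>)) (closed_simplex P le \<sigma> - U)"
      by (simp add: Diff_Int)
    moreover have "closedin (top_of_set ?C) (closed_simplex P le \<sigma>)"
      using \<sigma> closedin_closed_Int[OF closed_vanishing_on]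
      by (simp add: closed_simplex_eq_vanishing[of \<sigma> C])
    moreover have "closed_simplex P le \<sigma> \<subseteq> ?C"
      using \<sigma> by (auto simp: closed_simplex_def)
    ultimately show ?thesis
      by (metis closedin_trans_full inf.absorb_iff2 subtopology_subtopology)
  qed
  have "closedin (top_of_set ?C) (\<Union>\<sigma>\<in>?faces. closed_simplex P le \<sigma> - U)"
    using C closed_face by (intro closedin_Union) auto
  moreover have "(\<Union>\<sigma>\<in>?faces. closed_simplex P le \<sigma> - U) = ?C - U"
    using closed_simplex_eq_Union_chains[of P le C] by blast
  ultimately have "closedin (top_of_set ?C) (?C - U)" by (simp only:)
  then have "openin (top_of_set ?C) (topspace (top_of_set ?C) - (?C - U))"
    by (rule openin_diff[OF openin_topspace])
  moreover have "topspace (top_of_set ?C) - (?C - U) = U \<inter> ?C" by auto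
  ultimately show ?thesis by (simp only:)
qed

lemma continuous_map_from_order_complex:
  assumes "\<And>x. x \<in> realization_carrier P le \<Longrightarrow> h x \<in> topspace Z"
    and "\<And>\<sigma>. finite \<sigma> \<Longrightarrow> \<sigma> \<subseteq> P \<Longrightarrow> is_chain_in le \<sigma> \<Longrightarrow>
           continuous_map (top_of_set (closed_simplex P le \<sigma>)) Z h"
  shows "continuous_map (order_complex P le) Z h"
  unfolding continuous_map_def topspace_order_complex
proof (intro conjI allI impI Pi_I)
  fix U assume U: "openin Z U"
  show "openin (order_complex P le) {x \<in> realization_carrier P le. h x \<in> U}"
    unfolding openin_order_complex
  proof (intro conjI allI impI)
    fix \<sigma> assume "finite \<sigma> \<and> \<sigma> \<subseteq> P \<and> is_chain_in le \<sigma>"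
    then have "openin (top_of_set (closed_simplex P le \<sigma>))
                 {x \<in> topspace (top_of_set (closed_simplex P le \<sigma>)). h x \<in> U}"
      using openin_continuous_map_preimage[OF assms(2) U] by blast
    moreover have "{x \<in> topspace (top_of_set (closed_simplex P le \<sigma>)). h x \<in> U}
        = {x \<in> realization_carrier P le. h x \<in> U} \<inter> closed_simplex P le \<sigma>"
      using closed_simplex_subset_carrier[of P le \<sigma>] by auto
    ultimately show "openin (top_of_set (closed_simplex P le \<sigma>))
        ({x \<in> realization_carrier P le. h x \<in> U} \<inter> closed_simplex P le \<sigma>)"
      by simp
  qed auto
qed (use assms(1) in auto)

lemma continuous_map_into_order_complex:
  assumes C: "finite C" and h: "continuous_on A h" and im: "h ` A \<subseteq> closed_simplex Q le C"
  shows "continuous_map (top_of_set A) (order_complex Q le) h"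
  unfolding continuous_map_def topspace_order_complex topspace_euclidean_subtopology
proof (intro conjI allI impI Pi_I)
  fix x assume "x \<in> A"
  then show "h x \<in> realization_carrier Q le"
    using im closed_simplex_subset_carrier by blast
next
  fix U assume "openin (order_complex Q le) U"
  then obtain T where T: "open T" "U \<inter> closed_simplex Q le C = closed_simplex Q le C \<inter> T"
    using openin_closed_simplex_Int[OF C] unfolding openin_open by blast
  then have "{x \<in> A. h x \<in> U} = A \<inter> h -` T" using im by blast
  then show "openin (top_of_set A) {x \<in> A. h x \<in> U}"
    using continuous_openin_preimage_gen[OF h T(1)] by simp
qed

text \<open>The weak topology is compatible with products with a compact factor; this is the
  tube lemma applied simplex by simplex.\<close>
lemma openin_order_complex_tube:
  assumes A: "\<And>\<sigma>. finite \<sigma> \<Longrightarrow> \<sigma> \<subseteq> P \<Longrightarrow> is_chain_in le \<sigma> \<Longrightarrow>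
        openin (prod_topology X (top_of_set (closed_simplex P le \<sigma>)))
               (A \<inter> (topspace X \<times> closed_simplex P le \<sigma>))"
    and N: "compactin X N"
  shows "openin (order_complex P le) {x \<in> realization_carrier P le. N \<times> {x} \<subseteq> A}"
  unfolding openin_order_complex
proof (intro conjI allI impI)
  fix \<sigma> assume \<sigma>: "finite \<sigma> \<and> \<sigma> \<subseteq> P \<and> is_chain_in le \<sigma>"
  let ?S = "closed_simplex P le \<sigma>"
  let ?W = "{x \<in> realization_carrier P le. N \<times> {x} \<subseteq> A}"
  show "openin (top_of_set ?S) (?W \<inter> ?S)"
    unfolding openin_subopen[of _ "?W \<inter> ?S"]
  proof
    fix x assume x: "x \<in> ?W \<inter> ?S"
    have "N \<times> {x} \<subseteq> A \<inter> (topspace X \<times> ?S)"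
      using x compactin_subset_topspace[OF N] by auto
    moreover have "x \<in> topspace (top_of_set ?S)" using x by simp
    moreover have "openin (prod_topology X (top_of_set ?S)) (A \<inter> (topspace X \<times> ?S))"
      using A \<sigma> by blast
    ultimately obtain U V where UV: "openin (top_of_set ?S) V" "N \<subseteq> U" "x \<in> V"
        "U \<times> V \<subseteq> A \<inter> (topspace X \<times> ?S)"
      using tube_lemma_left[OF _ N] by metis
    moreover have "V \<subseteq> ?W \<inter> ?S"
      using UV openin_imp_subset[OF UV(1)] closed_simplex_subset_carrier by blast
    ultimately show "\<exists>T. openin (top_of_set ?S) T \<and> x \<in> T \<and> T \<subseteq> ?W \<inter> ?S" by blast
  qed
qed auto

lemma openin_interval_times_order_complex:
  assumes A: "A \<subseteq> {0..1} \<times> realization_carrier P le"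
    and A_simplex: "\<And>\<sigma>. finite \<sigma> \<Longrightarrow> \<sigma> \<subseteq> P \<Longrightarrow> is_chain_in le \<sigma> \<Longrightarrow>
        openin (prod_topology (top_of_set {0..1::real}) (top_of_set (closed_simplex P le \<sigma>)))
               (A \<inter> ({0..1} \<times> closed_simplex P le \<sigma>))"
  shows "openin (prod_topology (top_of_set {0..1::real}) (order_complex P le)) A"
  unfolding openin_subopen[of _ A]
proof
  fix z assume "z \<in> A"
  then obtain t0 x0 where z: "z = (t0, x0)" "t0 \<in> {0..1}" "x0 \<in> realization_carrier P le"
    using A by auto
  let ?S = "closed_simplex P le (osupp x0)"
  have x0: "x0 \<in> ?S" using z by (simp add: closed_simplex_def)
  have "openin (prod_topology (top_of_set {0..1}) (top_of_set ?S)) (A \<inter> ({0..1} \<times> ?S))"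
    using A_simplex realization_carrierD[OF z(3)] by blast
  then obtain U V where UV: "openin (top_of_set {0..1}) U" "t0 \<in> U" "x0 \<in> V"
      "U \<times> V \<subseteq> A \<inter> ({0..1} \<times> ?S)"
    using \<open>z \<in> A\<close> z x0 unfolding openin_prod_topology_alt by blast
  then obtain e where e: "e > 0" "\<And>t. t \<in> {0..1} \<Longrightarrow> dist t t0 < e \<Longrightarrow> t \<in> U"
    unfolding openin_euclidean_subtopology_iff by blast
  define N where "N = cball t0 (e/2) \<inter> {0..1}"
  have "compactin (top_of_set {0..1}) N"
    by (auto simp: N_def compactin_subtopology intro: compact_Int_closed)
  then have W: "openin (order_complex P le) {x \<in> realization_carrier P le. N \<times> {x} \<subseteq> A}"
    by (intro openin_order_complex_tube) (use A_simplex in auto)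
  have "N \<times> {x0} \<subseteq> A"
    using UV(3,4) e by (force simp: N_def dist_commute)
  then have "z \<in> ({0..1} \<inter> ball t0 (e/2)) \<times> {x \<in> realization_carrier P le. N \<times> {x} \<subseteq> A}"
    using z e(1) by auto
  moreover have "({0..1} \<inter> ball t0 (e/2)) \<times> {x \<in> realization_carrier P le. N \<times> {x} \<subseteq> A} \<subseteq> A"
    by (force simp: N_def)
  moreover have "openin (prod_topology (top_of_set {0..1}) (order_complex P le))
      (({0..1} \<inter> ball t0 (e/2)) \<times> {x \<in> realization_carrier P le. N \<times> {x} \<subseteq> A})"
    using W by (simp add: openin_prod_Times_iff openin_open_Int)
  ultimately show "\<exists>T. openin (prod_topology (top_of_set {0..1}) (order_complex P le)) T \<and>
                     z \<in> T \<and> T \<subseteq> A"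
    by blast
qed

lemma continuous_map_from_interval_times_order_complex:
  assumes "\<And>t x. t \<in> {0..1} \<Longrightarrow> x \<in> realization_carrier P le \<Longrightarrow> H (t, x) \<in> topspace Z"
    and "\<And>\<sigma>. finite \<sigma> \<Longrightarrow> \<sigma> \<subseteq> P \<Longrightarrow> is_chain_in le \<sigma> \<Longrightarrow>
           continuous_map (top_of_set ({0..1::real} \<times> closed_simplex P le \<sigma>)) Z H"
  shows "continuous_map (prod_topology (top_of_set {0..1::real}) (order_complex P le)) Z H"
  unfolding continuous_map_def topspace_prod_topology topspace_order_complex
    topspace_euclidean_subtopology
proof (intro conjI allI impI Pi_I)
  fix U assume U: "openin Z U"
  show "openin (prod_topology (top_of_set {0..1}) (order_complex P le))
          {z \<in> {0..1} \<times> realization_carrier P le. H z \<in> U}"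
  proof (rule openin_interval_times_order_complex)
    fix \<sigma> assume "finite \<sigma>" "\<sigma> \<subseteq> P" "is_chain_in le \<sigma>"
    then have "openin (top_of_set ({0..1} \<times> closed_simplex P le \<sigma>))
        {z \<in> topspace (top_of_set ({0..1} \<times> closed_simplex P le \<sigma>)). H z \<in> U}"
      using openin_continuous_map_preimage[OF assms(2) U] by blast
    moreover have "{z \<in> topspace (top_of_set ({0..1} \<times> closed_simplex P le \<sigma>)). H z \<in> U}
        = {z \<in> {0..1} \<times> realization_carrier P le. H z \<in> U} \<inter> ({0..1} \<times> closed_simplex P le \<sigma>)"
      using closed_simplex_subset_carrier[of P le \<sigma>] by auto
    ultimately show "openin (prod_topology (top_of_set {0..1}) (top_of_set (closed_simplex P le \<sigma>)))
        ({z \<in> {0..1} \<times> realization_carrier P le. H z \<in> U} \<inter> ({0..1} \<times> closed_simplex P le \<sigma>))"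
      by (simp add: subtopology_Times euclidean_product_topology)
  qed auto
qed (use assms(1) in auto)

section \<open>Realizations of order-preserving maps\<close>

lemma is_chain_in_subset: "is_chain_in le S \<Longrightarrow> T \<subseteq> S \<Longrightarrow> is_chain_in le T"
  unfolding is_chain_in_def by blast

lemma is_chain_in_image:
  assumes "is_chain_in le S" "S \<subseteq> P" "\<And>a b. a \<in> P \<Longrightarrow> b \<in> P \<Longrightarrow> le a b \<Longrightarrow> le' (f a) (f b)"
  shows "is_chain_in le' (f ` S)"
  using assms unfolding is_chain_in_def by blast

lemma sum_osupp_eq:
  assumes "finite T" "osupp g \<subseteq> T"
  shows "sum g (osupp g) = sum g T"
  by (rule sum.mono_neutral_left) (use assms in \<open>auto simp: osupp_def\<close>)

lemma osupp_realization_map_subset: "osupp (realization_map f x) \<subseteq> f ` osupp x"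
proof
  fix y assume y: "y \<in> osupp (realization_map f x)"
  show "y \<in> f ` osupp x"
  proof (rule ccontr)
    assume "y \<notin> f ` osupp x"
    then have "{a \<in> osupp x. f a = y} = {}" by blast
    then have "realization_map f x y = 0" by (simp only: realization_map_def sum.empty)
    then show False using y by (simp add: osupp_def)
  qed
qed

lemma osupp_realization_map:
  assumes x: "x \<in> realization_carrier P le"
  shows "osupp (realization_map f x) = f ` osupp x"
proof
  show "f ` osupp x \<subseteq> osupp (realization_map f x)"
  proof
    fix y assume "y \<in> f ` osupp x"
    then obtain a where a: "a \<in> osupp x" "f a = y" by blast
    have "0 < x a" using a(1) realization_carrierD(4)[OF x, of a] by (simp add: osupp_def)
    also have "x a \<le> (\<Sum>b\<in>{b \<in> osupp x. f b = y}. x b)"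
      using a realization_carrierD[OF x] by (intro member_le_sum) auto
    finally show "y \<in> osupp (realization_map f x)" by (simp add: osupp_def realization_map_def)
  qed
qed (rule osupp_realization_map_subset)

lemma realization_map_in_carrier:
  assumes x: "x \<in> realization_carrier P le"
    and f: "\<And>a. a \<in> P \<Longrightarrow> f a \<in> Q"
    and mono: "\<And>a b. a \<in> P \<Longrightarrow> b \<in> P \<Longrightarrow> le a b \<Longrightarrow> le' (f a) (f b)"
  shows "realization_map f x \<in> realization_carrier Q le'"
proof -
  note x_facts = realization_carrierD[OF x]
  have fin: "finite (f ` osupp x)" using x_facts(1) by simp
  have "sum (realization_map f x) (osupp (realization_map f x)) =
        (\<Sum>y\<in>f ` osupp x. \<Sum>a\<in>{a \<in> osupp x. f a = y}. x a)"
    using sum_osupp_eq[OF fin osupp_realization_map_subset] by (simp add: realization_map_def)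
  also have "\<dots> = sum x (osupp x)" by (rule sum.group) (use x_facts(1) in auto)
  finally have "sum (realization_map f x) (osupp (realization_map f x)) = 1"
    using x_facts(5) by simp
  moreover have "is_chain_in le' (f ` osupp x)"
    by (rule is_chain_in_image[of le _ P le' f, OF x_facts(3,2) mono])
  ultimately show ?thesis
    using osupp_realization_map_subset[of f x] fin x_facts(2,4) f
    unfolding realization_carrier_def realization_map_def
    by (auto intro: sum_nonneg finite_subset is_chain_in_subset)
qed

lemma realization_map_on_closed_simplex:
  assumes "x \<in> closed_simplex P le \<sigma>" "finite \<sigma>"
  shows "realization_map f x = (\<lambda>y. \<Sum>a\<in>{a \<in> \<sigma>. f a = y}. x a)"
  unfolding realization_map_def
  by (intro ext sum.mono_neutral_left) (use assms in \<open>auto simp: closed_simplex_def osupp_def\<close>)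

lemma continuous_on_coordinate [continuous_intros]:
  "continuous_on S (\<lambda>x :: 'a \<Rightarrow> 'b::topological_space. x i)"
  by (rule continuous_on_subset[OF continuous_on_product_coordinates]) simp

lemma continuous_map_realization_map:
  assumes f: "\<And>a. a \<in> P \<Longrightarrow> f a \<in> Q"
    and mono: "\<And>a b. a \<in> P \<Longrightarrow> b \<in> P \<Longrightarrow> le a b \<Longrightarrow> le' (f a) (f b)"
  shows "continuous_map (order_complex P le) (order_complex Q le') (realization_map f)"
proof (rule continuous_map_from_order_complex)
  fix \<sigma> assume \<sigma>: "finite \<sigma>" "\<sigma> \<subseteq> P" "is_chain_in le \<sigma>"
  show "continuous_map (top_of_set (closed_simplex P le \<sigma>)) (order_complex Q le') (realization_map f)"
  proof (rule continuous_map_into_order_complex)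
    show "finite (f ` \<sigma>)" using \<sigma> by simp
    have "continuous_on (closed_simplex P le \<sigma>) (\<lambda>x y. \<Sum>a\<in>{a \<in> \<sigma>. f a = y}. x a)"
      by (intro continuous_intros)
    then show "continuous_on (closed_simplex P le \<sigma>) (realization_map f)"
      by (rule continuous_on_eq) (simp add: realization_map_on_closed_simplex[OF _ \<sigma>(1)])
    show "realization_map f ` closed_simplex P le \<sigma> \<subseteq> closed_simplex Q le' (f ` \<sigma>)"
      using osupp_realization_map_subset realization_map_in_carrier[of _ P le f Q le', OF _ f mono]
      by (fastforce simp: closed_simplex_def)
  qed
qed (simp add: realization_map_in_carrier[of _ P le f Q le', OF _ f mono])

lemma realization_map_ident: "realization_map (\<lambda>a. a) = id"
proof (intro ext)
  fix x y
  have "{a \<in> osupp x. a = y} = (if y \<in> osupp x then {y} else {})" by auto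
  then show "realization_map (\<lambda>a. a) x y = id x y"
    by (simp add: realization_map_def osupp_def)
qed

lemma realization_map_comp:
  assumes x: "x \<in> realization_carrier P le"
  shows "realization_map g (realization_map f x) = realization_map (g \<circ> f) x"
proof
  fix z
  have "realization_map g (realization_map f x) z
      = (\<Sum>y\<in>{y \<in> f ` osupp x. g y = z}. \<Sum>a\<in>{a \<in> {a \<in> osupp x. g (f a) = z}. f a = y}. x a)"
    unfolding realization_map_def[of g] osupp_realization_map[OF x]
    by (intro sum.cong) (auto simp: realization_map_def intro!: sum.cong)
  also have "\<dots> = (\<Sum>a\<in>{a \<in> osupp x. g (f a) = z}. x a)"
    by (rule sum.group) (use realization_carrierD(1)[OF x] in auto)
  finally show "realization_map g (realization_map f x) z = realization_map (g \<circ> f) x z"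
    by (simp add: realization_map_def)
qed

section \<open>Homotopies between realizations of comparable maps\<close>

text \<open>The homotopy between the realizations of monotone maps \<open>f \<le> g\<close>: at time \<open>t\<close> the first
  \<open>t\<close> units of mass of a point, counted from the top of its chain downwards, are moved from
  \<open>f a\<close> to \<open>g a\<close>. Every vertex still (partly) sent to \<open>f\<close> then lies below every vertex
  already (partly) sent to \<open>g\<close>, and \<open>f a \<subseteq> f b \<subseteq> g b\<close> keeps the support a chain.
  The straight-line homotopy would not do: \<open>g a\<close> and \<open>f b\<close> need not be comparable.\<close>

definition mass_above :: "('a set \<Rightarrow> real) \<Rightarrow> 'a set set \<Rightarrow> 'a set \<Rightarrow> real" where
  "mass_above x S a = (\<Sum>b\<in>{b \<in> S. a \<subset> b}. x b)"

definition moved_mass :: "real \<Rightarrow> ('a set \<Rightarrow> real) \<Rightarrow> 'a set set \<Rightarrow> 'a set \<Rightarrow> real" where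
  "moved_mass t x S a = min (x a) (max 0 (t - mass_above x S a))"

definition slide_on ::
    "('a set \<Rightarrow> 'b) \<Rightarrow> ('a set \<Rightarrow> 'b) \<Rightarrow> 'a set set \<Rightarrow> real \<Rightarrow> ('a set \<Rightarrow> real) \<Rightarrow> 'b \<Rightarrow> real" where
  "slide_on f g S t x y = (\<Sum>a\<in>S. (x a - moved_mass t x S a) * of_bool (y = f a)
                                   + moved_mass t x S a * of_bool (y = g a))"

definition slide :: "('a set \<Rightarrow> 'b) \<Rightarrow> ('a set \<Rightarrow> 'b) \<Rightarrow> real \<Rightarrow> ('a set \<Rightarrow> real) \<Rightarrow> 'b \<Rightarrow> real" where
  "slide f g t x = slide_on f g (osupp x) t x"

lemma moved_mass_bounds: "0 \<le> x a \<Longrightarrow> 0 \<le> moved_mass t x S a \<and> moved_mass t x S a \<le> x a"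
  unfolding moved_mass_def by auto

lemma add_mass_above_le:
  assumes "finite S" "\<And>a. 0 \<le> x a" "a \<in> S" "b \<subset> a"
  shows "x a + mass_above x S a \<le> mass_above x S b"
proof -
  have "x a + mass_above x S a = sum x (insert a {c \<in> S. a \<subset> c})"
    unfolding mass_above_def using assms(1) by (subst sum.insert) auto
  also have "\<dots> \<le> mass_above x S b"
    unfolding mass_above_def by (rule sum_mono2) (use assms in auto)
  finally show ?thesis .
qed

lemma moved_mass_eq_if_below_moved:
  assumes "finite S" "\<And>a. 0 \<le> x a" "a \<in> S" "b \<subset> a" "moved_mass t x S b \<noteq> 0"
  shows "moved_mass t x S a = x a"
proof -
  have "0 < t - mass_above x S b" using assms(2)[of b] assms(5) unfolding moved_mass_def by auto
  moreover have "x a + mass_above x S a \<le> mass_above x S b"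
    using assms(1-4) by (rule add_mass_above_le)
  ultimately have "x a \<le> t - mass_above x S a" by linarith
  then show ?thesis using assms(2)[of a] unfolding moved_mass_def by auto
qed

lemma moved_mass_0: "(\<And>b. 0 \<le> x b) \<Longrightarrow> moved_mass 0 x S a = 0"
  unfolding moved_mass_def mass_above_def by (simp add: sum_nonneg)

lemma moved_mass_1:
  assumes x: "x \<in> realization_carrier P le" and a: "a \<in> osupp x"
  shows "moved_mass 1 x (osupp x) a = x a"
proof -
  note x_facts = realization_carrierD[OF x]
  have "x a + mass_above x (osupp x) a = sum x (insert a {b \<in> osupp x. a \<subset> b})"
    unfolding mass_above_def using x_facts(1) by (subst sum.insert) auto
  also have "\<dots> \<le> sum x (osupp x)"
    by (rule sum_mono2) (use x_facts a in auto)
  finally show ?thesis using x_facts(4,5) unfolding moved_mass_def by auto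
qed

lemma slide_on_nonzero:
  assumes "slide_on f g S t x y \<noteq> 0"
  shows "\<exists>a\<in>S. (y = f a \<and> moved_mass t x S a \<noteq> x a) \<or> (y = g a \<and> moved_mass t x S a \<noteq> 0)"
proof (rule ccontr)
  assume "\<not> ?thesis"
  then have "slide_on f g S t x y = 0" unfolding slide_on_def by (intro sum.neutral) auto
  with assms show False by simp
qed

lemma sum_slide_on:
  assumes "finite C" "f ` S \<subseteq> C" "g ` S \<subseteq> C"
  shows "sum (slide_on f g S t x) C = sum x S"
proof -
  have "sum (slide_on f g S t x) C =
        (\<Sum>a\<in>S. (x a - moved_mass t x S a) * (\<Sum>y\<in>C. of_bool (y = f a))
               + moved_mass t x S a * (\<Sum>y\<in>C. of_bool (y = g a)))"
    unfolding slide_on_def by (subst sum.swap) (simp add: sum.distrib sum_distrib_left)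
  also have "\<dots> = sum x S"
  proof -
    have "(\<Sum>y\<in>C. of_bool (y = c)) = (1::real)" if "c \<in> C" for c
      using assms(1) that by (simp add: of_bool_def sum.delta')
    then show ?thesis using assms(2,3) by (intro sum.cong) (auto simp: image_subset_iff)
  qed
  finally show ?thesis .
qed

lemma osupp_slide_on: "osupp (slide_on f g S t x) \<subseteq> f ` S \<union> g ` S"
  unfolding osupp_def by (auto dest: slide_on_nonzero)

lemma is_chain_in_image_Un:
  assumes chain: "is_chain_in (\<subseteq>) (L \<union> U)" and P: "L \<union> U \<subseteq> P"
    and f: "\<And>a b. a \<in> P \<Longrightarrow> b \<in> P \<Longrightarrow> a \<subseteq> b \<Longrightarrow> f a \<subseteq> f b"
    and g: "\<And>a b. a \<in> P \<Longrightarrow> b \<in> P \<Longrightarrow> a \<subseteq> b \<Longrightarrow> g a \<subseteq> g b"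
    and fg: "\<And>a. a \<in> P \<Longrightarrow> f a \<subseteq> g a"
    and LU: "\<And>a b. a \<in> L \<Longrightarrow> b \<in> U \<Longrightarrow> a \<subseteq> b"
  shows "is_chain_in (\<subseteq>) (f ` L \<union> g ` U)"
proof -
  have "is_chain_in (\<subseteq>) L" "is_chain_in (\<subseteq>) U"
    using chain by (auto intro: is_chain_in_subset)
  then have chain_fL: "is_chain_in (\<subseteq>) (f ` L)" and chain_gU: "is_chain_in (\<subseteq>) (g ` U)"
    using P is_chain_in_image[of "(\<subseteq>)" _ P "(\<subseteq>)"] f g by (metis le_supE)+
  have cross: "f a \<subseteq> g b" if "a \<in> L" "b \<in> U" for a b
    using f[of a b] fg[of b] LU[OF that] that P by blast
  show ?thesis
    unfolding is_chain_in_def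
  proof (intro ballI)
    fix y1 y2 assume "y1 \<in> f ` L \<union> g ` U" "y2 \<in> f ` L \<union> g ` U"
    then consider "y1 \<in> f ` L" "y2 \<in> f ` L" | "y1 \<in> g ` U" "y2 \<in> g ` U"
      | "y1 \<in> f ` L" "y2 \<in> g ` U" | "y1 \<in> g ` U" "y2 \<in> f ` L"
      by blast
    then show "y1 \<subseteq> y2 \<or> y2 \<subseteq> y1"
    proof cases
      case 1 then show ?thesis using chain_fL unfolding is_chain_in_def by blast
    next
      case 2 then show ?thesis using chain_gU unfolding is_chain_in_def by blast
    next
      case 3 then show ?thesis using cross by blast
    next
      case 4 then show ?thesis using cross by blast
    qed
  qed
qed

lemma slide_in_carrier:
  assumes x: "x \<in> realization_carrier P (\<subseteq>)"
    and fP: "\<And>a. a \<in> P \<Longrightarrow> f a \<in> Q" and gP: "\<And>a. a \<in> P \<Longrightarrow> g a \<in> Q"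
    and f: "\<And>a b. a \<in> P \<Longrightarrow> b \<in> P \<Longrightarrow> a \<subseteq> b \<Longrightarrow> f a \<subseteq> f b"
    and g: "\<And>a b. a \<in> P \<Longrightarrow> b \<in> P \<Longrightarrow> a \<subseteq> b \<Longrightarrow> g a \<subseteq> g b"
    and fg: "\<And>a. a \<in> P \<Longrightarrow> f a \<subseteq> g a"
  shows "slide f g t x \<in> realization_carrier Q (\<subseteq>)"
proof -
  note x_facts = realization_carrierD[OF x]
  let ?S = "osupp x"
  let ?h = "slide_on f g ?S t x"
  define L where "L = {a \<in> ?S. moved_mass t x ?S a \<noteq> x a}"
  define U where "U = {a \<in> ?S. moved_mass t x ?S a \<noteq> 0}"
  have supp: "osupp ?h \<subseteq> f ` L \<union> g ` U"
    unfolding osupp_def L_def U_def by (auto dest!: slide_on_nonzero)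
  have "a \<subseteq> b" if "a \<in> L" "b \<in> U" for a b
  proof (rule ccontr)
    assume "\<not> a \<subseteq> b"
    then have "b \<subset> a" using x_facts(3) that unfolding is_chain_in_def L_def U_def by blast
    then show False
      using moved_mass_eq_if_below_moved[of ?S x a b t] x_facts(1,4) that by (auto simp: L_def U_def)
  qed
  then have "is_chain_in (\<subseteq>) (f ` L \<union> g ` U)"
    using x_facts(2,3) by (intro is_chain_in_image_Un[OF _ _ f g fg])
      (auto simp: L_def U_def intro: is_chain_in_subset)
  moreover have fin: "finite (f ` ?S \<union> g ` ?S)" using x_facts(1) by simp
  moreover have "sum ?h (osupp ?h) = 1"
    using sum_osupp_eq[OF fin osupp_slide_on] sum_slide_on[OF fin, of f ?S g t x] x_facts(5)
    by simp
  moreover have "0 \<le> ?h y" for y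
    unfolding slide_on_def using moved_mass_bounds[of x, OF x_facts(4)] x_facts(4)
    by (intro sum_nonneg add_nonneg_nonneg mult_nonneg_nonneg) auto
  moreover have "osupp ?h \<subseteq> Q"
    using osupp_slide_on[of f g ?S t x] x_facts(2) fP gP by blast
  ultimately show ?thesis
    using supp osupp_slide_on[of f g ?S t x] unfolding realization_carrier_def slide_def
    by (auto intro: finite_subset is_chain_in_subset)
qed

lemma slide_0:
  assumes x: "x \<in> realization_carrier P le"
  shows "slide f g 0 x = realization_map f x"
proof
  fix y
  note x_facts = realization_carrierD[OF x]
  have "slide f g 0 x y = (\<Sum>a\<in>osupp x. if f a = y then x a else 0)"
    unfolding slide_def slide_on_def
    using moved_mass_0[of x, OF x_facts(4)] by (intro sum.cong) auto
  also have "\<dots> = realization_map f x y"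
    unfolding realization_map_def using x_facts(1) by (simp add: sum.inter_filter)
  finally show "slide f g 0 x y = realization_map f x y" .
qed

lemma slide_1:
  assumes x: "x \<in> realization_carrier P le"
  shows "slide f g 1 x = realization_map g x"
proof
  fix y
  note x_facts = realization_carrierD[OF x]
  have "slide f g 1 x y = (\<Sum>a\<in>osupp x. if g a = y then x a else 0)"
    unfolding slide_def slide_on_def using moved_mass_1[OF x] by (intro sum.cong) auto
  also have "\<dots> = realization_map g x y"
    unfolding realization_map_def using x_facts(1) by (simp add: sum.inter_filter)
  finally show "slide f g 1 x y = realization_map g x y" .
qed

lemma slide_on_closed_simplex:
  assumes x: "x \<in> closed_simplex P le \<sigma>" and fin: "finite \<sigma>"
  shows "slide f g t x = slide_on f g \<sigma> t x"
proof -
  have supp: "osupp x \<subseteq> \<sigma>" using x by (simp add: closed_simplex_def)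
  have "mass_above x (osupp x) a = mass_above x \<sigma> a" for a
    unfolding mass_above_def
    by (rule sum.mono_neutral_left) (use supp fin in \<open>auto simp: osupp_def\<close>)
  then have moved: "moved_mass t x (osupp x) = moved_mass t x \<sigma>"
    by (simp add: moved_mass_def fun_eq_iff)
  have "moved_mass t x \<sigma> a = 0" if "a \<notin> osupp x" for a
    using that unfolding moved_mass_def osupp_def by auto
  then show ?thesis
    unfolding slide_def slide_on_def moved
    by (intro ext sum.mono_neutral_left) (use supp fin in \<open>auto simp: osupp_def\<close>)
qed

lemma continuous_on_slide_on: "continuous_on A (\<lambda>z. slide_on f g \<sigma> (fst z) (snd z))"
  unfolding slide_on_def moved_mass_def mass_above_def
  by (intro continuous_intros continuous_on_compose2[OF continuous_on_coordinate continuous_on_snd])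
    auto

lemma homotopic_realization_maps:
  assumes fP: "\<And>a. a \<in> P \<Longrightarrow> f a \<in> Q" and gP: "\<And>a. a \<in> P \<Longrightarrow> g a \<in> Q"
    and f: "\<And>a b. a \<in> P \<Longrightarrow> b \<in> P \<Longrightarrow> a \<subseteq> b \<Longrightarrow> f a \<subseteq> f b"
    and g: "\<And>a b. a \<in> P \<Longrightarrow> b \<in> P \<Longrightarrow> a \<subseteq> b \<Longrightarrow> g a \<subseteq> g b"
    and fg: "\<And>a. a \<in> P \<Longrightarrow> f a \<subseteq> g a"
  shows "homotopic_with (\<lambda>h. True) (order_complex P (\<subseteq>)) (order_complex Q (\<subseteq>))
           (realization_map f) (realization_map g)"
proof -
  note carrier = slide_in_carrier[OF _ fP gP f g fg]
  have "continuous_map (prod_topology (top_of_set {0..1}) (order_complex P (\<subseteq>)))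
          (order_complex Q (\<subseteq>)) (\<lambda>(t, x). slide f g t x)"
  proof (rule continuous_map_from_interval_times_order_complex)
    fix \<sigma> assume \<sigma>: "finite \<sigma>" "\<sigma> \<subseteq> P" "is_chain_in (\<subseteq>) \<sigma>"
    let ?D = "{0..1} \<times> closed_simplex P (\<subseteq>) \<sigma>"
    show "continuous_map (top_of_set ?D) (order_complex Q (\<subseteq>)) (\<lambda>(t, x). slide f g t x)"
    proof (rule continuous_map_into_order_complex)
      show "finite (f ` \<sigma> \<union> g ` \<sigma>)" using \<sigma>(1) by simp
      show "continuous_on ?D (\<lambda>(t, x). slide f g t x)"
        using continuous_on_slide_on
        by (rule continuous_on_eq) (auto simp: slide_on_closed_simplex[OF _ \<sigma>(1)])
      show "(\<lambda>(t, x). slide f g t x) ` ?D \<subseteq> closed_simplex Q (\<subseteq>) (f ` \<sigma> \<union> g ` \<sigma>)"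
        using carrier osupp_slide_on
        by (fastforce simp: closed_simplex_def slide_def)
    qed
  qed (use carrier in auto)
  then show ?thesis
    by (subst homotopic_with) (use slide_0 slide_1 in \<open>auto intro!: exI[of _ "\<lambda>(t, x). slide f g t x"]\<close>)
qed

lemma homotopic_realization_map_id:
  assumes "\<And>a. a \<in> P \<Longrightarrow> h a \<in> P"
    and "\<And>a b. a \<in> P \<Longrightarrow> b \<in> P \<Longrightarrow> a \<subseteq> b \<Longrightarrow> h a \<subseteq> h b"
    and "\<And>a. a \<in> P \<Longrightarrow> a \<subseteq> h a"
  shows "homotopic_with (\<lambda>x. True) (order_complex P (\<subseteq>)) (order_complex P (\<subseteq>)) (realization_map h) id"
proof -
  have "homotopic_with (\<lambda>x. True) (order_complex P (\<subseteq>)) (order_complex P (\<subseteq>))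
          (realization_map h) (realization_map (\<lambda>a. a))"
    by (rule homotopic_with_symD, rule homotopic_realization_maps) (use assms in auto)
  then show ?thesis unfolding realization_map_ident .
qed

lemma realization_maps_homotopy_inverse:
  assumes fP: "\<And>a. a \<in> P \<Longrightarrow> f a \<in> Q" and gQ: "\<And>b. b \<in> Q \<Longrightarrow> g b \<in> P"
    and f: "\<And>a b. a \<in> P \<Longrightarrow> b \<in> P \<Longrightarrow> a \<subseteq> b \<Longrightarrow> f a \<subseteq> f b"
    and g: "\<And>a b. a \<in> Q \<Longrightarrow> b \<in> Q \<Longrightarrow> a \<subseteq> b \<Longrightarrow> g a \<subseteq> g b"
    and gf: "\<And>a. a \<in> P \<Longrightarrow> a \<subseteq> g (f a)" and fg: "\<And>b. b \<in> Q \<Longrightarrow> b \<subseteq> f (g b)"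
  shows "homotopic_with (\<lambda>x. True) (order_complex P (\<subseteq>)) (order_complex P (\<subseteq>))
           (realization_map g \<circ> realization_map f) id"
    and "homotopic_with (\<lambda>x. True) (order_complex Q (\<subseteq>)) (order_complex Q (\<subseteq>))
           (realization_map f \<circ> realization_map g) id"
proof -
  have "homotopic_with (\<lambda>x. True) (order_complex P (\<subseteq>)) (order_complex P (\<subseteq>))
          (realization_map (g \<circ> f)) id"
    using fP gQ f g gf by (intro homotopic_realization_map_id) auto
  then show "homotopic_with (\<lambda>x. True) (order_complex P (\<subseteq>)) (order_complex P (\<subseteq>))
               (realization_map g \<circ> realization_map f) id"
    by (rule homotopic_with_eq) (auto simp: realization_map_comp)
  have "homotopic_with (\<lambda>x. True) (order_complex Q (\<subseteq>)) (order_complex Q (\<subseteq>))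
          (realization_map (f \<circ> g)) id"
    using fP gQ f g fg by (intro homotopic_realization_map_id) auto
  then show "homotopic_with (\<lambda>x. True) (order_complex Q (\<subseteq>)) (order_complex Q (\<subseteq>))
               (realization_map f \<circ> realization_map g) id"
    by (rule homotopic_with_eq) (auto simp: realization_map_comp)
qed

section \<open>Subspaces, dimension and \<open>O\<close>-spans\<close>

lemma vec_lambda_vadd: "vec_lambda (vadd x y) = (vec_lambda x + vec_lambda y :: 'a::field ^ 'n)"
  by (simp add: vec_eq_iff vadd_def)

lemma vec_lambda_vscale: "vec_lambda (vscale c x) = (c *s vec_lambda x :: 'a::field ^ 'n)"
  by (simp add: vec_eq_iff vscale_def)

lemma vec_lambda_vzero: "vec_lambda vzero = (0 :: 'a::field ^ 'n)"
  by (simp add: vec_eq_iff vzero_def)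

lemma is_K_subspace_UNIV: "is_K_subspace UNIV"
  by (simp add: is_K_subspace_def)

lemma subspace_vec_lambda_image:
  assumes "is_K_subspace (W :: ('n::finite \<Rightarrow> 'a::field) set)"
  shows "vec.subspace (vec_lambda ` W)"
  using assms unfolding vec.subspace_def is_K_subspace_def
  by (auto simp: vec_lambda_vzero[symmetric] vec_lambda_vadd[symmetric]
      vec_lambda_vscale[symmetric])

definition subspace_dim :: "('n::finite \<Rightarrow> 'a::field) set \<Rightarrow> nat" where
  "subspace_dim W = vec.dim (vec_lambda ` W :: ('a ^ 'n) set)"

lemma subspace_dim_UNIV: "subspace_dim (UNIV :: ('n::finite \<Rightarrow> 'a::field) set) = CARD('n)"
proof -
  have "range (vec_lambda :: ('n \<Rightarrow> 'a) \<Rightarrow> 'a ^ 'n) = UNIV"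
    by (metis surj_def vec_lambda_eta)
  then show ?thesis by (simp add: subspace_dim_def vec_dim_card card_cart_basis)
qed

lemma subspace_dim_strict_mono:
  fixes W W' :: "('n::finite \<Rightarrow> 'a::field) set"
  assumes "is_K_subspace W'" "is_K_subspace W" "W' \<subset> W"
  shows "subspace_dim W' < subspace_dim W"
proof -
  have "vec_lambda ` W' \<subset> (vec_lambda ` W :: ('a ^ 'n) set)"
    using assms(3) by (intro image_strict_mono) (auto simp: inj_on_def)
  then have "vec.span (vec_lambda ` W') \<subset> vec.span (vec_lambda ` W :: ('a ^ 'n) set)"
    using subspace_vec_lambda_image[OF assms(1)] subspace_vec_lambda_image[OF assms(2)]
    by (simp only: vec.span_eq_iff[symmetric])
  then show ?thesis unfolding subspace_dim_def by (rule vec.dim_psubset)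
qed

lemma subspace_dim_less_card:
  assumes "is_K_subspace (W :: ('n::finite \<Rightarrow> 'a::field) set)" "W \<noteq> UNIV"
  shows "subspace_dim W < CARD('n)"
  using subspace_dim_strict_mono[OF assms(1) is_K_subspace_UNIV] assms(2)
  by (simp add: subspace_dim_UNIV psubset_eq)

definition K_span :: "('n \<Rightarrow> 'a::field) set \<Rightarrow> ('n \<Rightarrow> 'a) set" where
  "K_span U = {vscale c u | c u. u \<in> U}"

lemma subset_K_span: "U \<subseteq> K_span U"
proof
  fix u assume "u \<in> U"
  moreover have "u = vscale 1 u" by (simp add: vscale_def)
  ultimately show "u \<in> K_span U" unfolding K_span_def by blast
qed

lemma K_span_mono: "U \<subseteq> U' \<Longrightarrow> K_span U \<subseteq> K_span U'"
  unfolding K_span_def by blast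

text \<open>The \<open>K\<close>-multiples of an \<open>O\<close>-span lie in the \<open>K\<close>-span of its generators.\<close>
lemma K_span_O_span_neq_UNIV:
  fixes gs :: "('n::finite \<Rightarrow> 'a::field) list"
  assumes "length gs < CARD('n)"
  shows "K_span (O_span OK gs) \<noteq> UNIV"
proof
  assume all: "K_span (O_span OK gs) = UNIV"
  have "(UNIV :: ('a ^ 'n) set) \<subseteq> vec.span (vec_lambda ` set gs)"
  proof
    fix y :: "'a ^ 'n"
    have "(\<lambda>i. y $ i) \<in> K_span (O_span OK gs)" using all by simp
    then obtain c cs where y: "(\<lambda>i. y $ i) = vscale c (\<lambda>i. \<Sum>j<length gs. cs j * (gs ! j) i)"
      unfolding K_span_def O_span_def by blast
    have "y = c *s (\<Sum>j<length gs. cs j *s vec_lambda (gs ! j))"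
      using arg_cong[OF y, of vec_lambda] by (simp add: vec_lambda_vscale vec_eq_iff sum_component)
    also have "\<dots> \<in> vec.span (vec_lambda ` set gs)"
      by (intro vec.span_scale vec.span_sum vec.span_base) auto
    finally show "y \<in> vec.span (vec_lambda ` set gs)" .
  qed
  then have "CARD('n) \<le> card (vec_lambda ` set gs :: ('a ^ 'n) set)"
    using vec.dim_le_card[of UNIV "vec_lambda ` set gs"] by (simp add: vec_dim_card card_cart_basis)
  also have "\<dots> \<le> length gs" using card_image_le card_length le_trans by blast
  finally show False using assms by simp
qed

lemma O_span_Nil: "O_span OK [] = {vzero}"
  by (auto simp: O_span_def vzero_def)

lemma O_span_Cons:
  "O_span OK (g # gs) = {vadd (vscale c g) r | c r. c \<in> OK \<and> r \<in> O_span OK gs}"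
proof -
  have comb: "(\<lambda>i. \<Sum>j<length (g # gs). c j * ((g # gs) ! j) i)
      = vadd (vscale (c 0) g) (\<lambda>i. \<Sum>j<length gs. c (Suc j) * (gs ! j) i)" for c
    unfolding length_Cons sum.lessThan_Suc_shift by (simp add: vadd_def vscale_def)
  show ?thesis
  proof (intro set_eqI iffI)
    fix x assume "x \<in> O_span OK (g # gs)"
    then obtain c where "x = (\<lambda>i. \<Sum>j<length (g # gs). c j * ((g # gs) ! j) i)"
        "\<forall>j<length (g # gs). c j \<in> OK"
      unfolding O_span_def by blast
    then show "x \<in> {vadd (vscale c g) r | c r. c \<in> OK \<and> r \<in> O_span OK gs}"
      unfolding comb O_span_def by fastforce
  next
    fix x assume "x \<in> {vadd (vscale c g) r | c r. c \<in> OK \<and> r \<in> O_span OK gs}"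
    then obtain c0 cs where x: "x = vadd (vscale c0 g) (\<lambda>i. \<Sum>j<length gs. cs j * (gs ! j) i)"
        and c: "c0 \<in> OK" "\<forall>j<length gs. cs j \<in> OK"
      unfolding O_span_def by blast
    define c where "c j = (case j of 0 \<Rightarrow> c0 | Suc j \<Rightarrow> cs j)" for j
    have "x = (\<lambda>i. \<Sum>j<length (g # gs). c j * ((g # gs) ! j) i)"
      unfolding comb x by (simp add: c_def)
    moreover have "\<forall>j<length (g # gs). c j \<in> OK"
      using c by (auto simp: c_def split: nat.split)
    ultimately show "x \<in> O_span OK (g # gs)" unfolding O_span_def by blast
  qed
qed

lemma is_O_submodule_Int:
  "is_O_submodule OK A \<Longrightarrow> is_O_submodule OK B \<Longrightarrow> is_O_submodule OK (A \<inter> B)"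
  unfolding is_O_submodule_def by blast

lemma is_O_submodule_if_K_subspace: "is_K_subspace W \<Longrightarrow> is_O_submodule OK W"
  unfolding is_K_subspace_def is_O_submodule_def by blast

section \<open>Lattices over a discretely valued field\<close>

locale discrete_valuation =
  fixes v :: "'k::field \<Rightarrow> int"
  assumes normalized: "normalized_discrete_valuation v"
begin

lemma valuation_mult: "x \<noteq> 0 \<Longrightarrow> y \<noteq> 0 \<Longrightarrow> v (x * y) = v x + v y"
  using normalized unfolding normalized_discrete_valuation_def by blast

lemma valuation_add: "x \<noteq> 0 \<Longrightarrow> y \<noteq> 0 \<Longrightarrow> x + y \<noteq> 0 \<Longrightarrow> min (v x) (v y) \<le> v (x + y)"
  using normalized unfolding normalized_discrete_valuation_def by blast

lemma valuation_one: "v 1 = 0"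
  using valuation_mult[of 1 1] by simp

lemma valuation_uminus: "v (- x) = v x"
proof -
  have "v (-1) = 0" using valuation_mult[of "-1" "-1"] valuation_one by simp
  then show ?thesis using valuation_mult[of "-1" x] by (cases "x = 0") simp_all
qed

lemma valuation_divide: "x \<noteq> 0 \<Longrightarrow> y \<noteq> 0 \<Longrightarrow> v (x / y) = v x - v y"
  using valuation_mult[of "x / y" y] by simp

lemma mem_valuation_ring_iff: "x \<in> valuation_ring v \<longleftrightarrow> x = 0 \<or> 0 \<le> v x"
  by (simp add: valuation_ring_def val_ge_def)

lemma zero_in_valuation_ring: "0 \<in> valuation_ring v"
  by (simp add: mem_valuation_ring_iff)

lemma mult_in_valuation_ring:
  "x \<in> valuation_ring v \<Longrightarrow> y \<in> valuation_ring v \<Longrightarrow> x * y \<in> valuation_ring v"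
  by (cases "x = 0 \<or> y = 0") (auto simp: mem_valuation_ring_iff valuation_mult)

lemma add_in_valuation_ring:
  "x \<in> valuation_ring v \<Longrightarrow> y \<in> valuation_ring v \<Longrightarrow> x + y \<in> valuation_ring v"
  unfolding mem_valuation_ring_iff using valuation_add[of x y] by fastforce

lemma diff_in_valuation_ring:
  "x \<in> valuation_ring v \<Longrightarrow> y \<in> valuation_ring v \<Longrightarrow> x - y \<in> valuation_ring v"
  using add_in_valuation_ring[of x "- y"] by (simp add: mem_valuation_ring_iff valuation_uminus)

lemma divide_in_valuation_ring: "y \<noteq> 0 \<Longrightarrow> x = 0 \<or> v y \<le> v x \<Longrightarrow> x / y \<in> valuation_ring v"
  by (cases "x = 0") (auto simp: mem_valuation_ring_iff valuation_divide)

lemma one_neq_uniformizer_mult: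
  assumes "v \<pi> = 1" "c \<in> valuation_ring v"
  shows "1 \<noteq> \<pi> * c"
proof
  assume one: "1 = \<pi> * c"
  then have "\<pi> \<noteq> 0" "c \<noteq> 0" by auto
  then have "0 = 1 + v c" using valuation_mult[of \<pi> c] one assms(1) valuation_one by simp
  then show False using assms(2) \<open>c \<noteq> 0\<close> by (simp add: mem_valuation_ring_iff)
qed

lemma is_O_submodule_std_lattice: "is_O_submodule (valuation_ring v) (std_lattice (valuation_ring v))"
  unfolding is_O_submodule_def std_lattice_def vzero_def vadd_def vscale_def
  by (auto intro: zero_in_valuation_ring add_in_valuation_ring mult_in_valuation_ring)

lemma vzero_in_std_lattice: "vzero \<in> std_lattice (valuation_ring v)"
  by (simp add: std_lattice_def vzero_def zero_in_valuation_ring)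

text \<open>Divide by a coordinate of minimal valuation.\<close>
lemma exists_scaled_into_std_lattice:
  fixes w :: "'n::finite \<Rightarrow> 'k"
  assumes "w \<noteq> vzero"
  obtains i where "w i \<noteq> 0" "vscale (inverse (w i)) w \<in> std_lattice (valuation_ring v)"
proof -
  define J where "J = {j. w j \<noteq> 0}"
  have J: "finite J" "J \<noteq> {}" using assms by (auto simp: J_def vzero_def fun_eq_iff)
  have "Min ((\<lambda>j. v (w j)) ` J) \<in> (\<lambda>j. v (w j)) ` J" using J by (intro Min_in) auto
  then obtain i where i: "i \<in> J" "v (w i) = Min ((\<lambda>j. v (w j)) ` J)" by auto
  have "w j = 0 \<or> v (w i) \<le> v (w j)" for j
    using i(2) J(1) by (auto simp: J_def intro: Min_le)
  then have "w j / w i \<in> valuation_ring v" for j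
    using i(1) by (intro divide_in_valuation_ring) (auto simp: J_def)
  then have "vscale (inverse (w i)) w \<in> std_lattice (valuation_ring v)"
    by (simp add: std_lattice_def vscale_def divide_inverse mult.commute)
  then show ?thesis using that i by (simp add: J_def)
qed

lemma obtain_min_valuation_coordinate:
  assumes "u \<in> S" "u i \<noteq> 0" "S \<subseteq> std_lattice (valuation_ring v)"
  obtains u0 where "u0 \<in> S" "u0 i \<noteq> 0" "\<And>u. u \<in> S \<Longrightarrow> u i \<noteq> 0 \<Longrightarrow> v (u0 i) \<le> v (u i)"
proof -
  have nonneg: "0 \<le> v (u i)" if "u \<in> S" "u i \<noteq> 0" for u
    using that assms(3) by (auto simp: std_lattice_def mem_valuation_ring_iff)
  obtain u0 where "u0 \<in> S \<and> u0 i \<noteq> 0"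
      "\<And>u. u \<in> S \<and> u i \<noteq> 0 \<Longrightarrow> nat (v (u0 i)) \<le> nat (v (u i))"
    using ex_has_least_nat[of "\<lambda>u. u \<in> S \<and> u i \<noteq> 0" u "\<lambda>u. nat (v (u i))"] assms(1,2) by blast
  then show ?thesis using that nonneg by force
qed

text \<open>A vector of \<open>W \<inter> \<Lambda>\<close> whose \<open>i\<close>-th coordinate has minimal valuation splits off
  \<open>W \<inter> \<Lambda>\<close> as a free rank-one summand, complementary to the lattice of the hyperplane
  \<open>x i = 0\<close> of \<open>W\<close>.\<close>
lemma K_subspace_Int_std_lattice_split:
  assumes W: "is_K_subspace W" and u0: "u0 \<in> W \<inter> std_lattice (valuation_ring v)" "u0 i \<noteq> 0"
    and min: "\<And>u. u \<in> W \<inter> std_lattice (valuation_ring v) \<Longrightarrow> u i \<noteq> 0 \<Longrightarrow> v (u0 i) \<le> v (u i)"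
  shows "W \<inter> std_lattice (valuation_ring v) =
    {vadd (vscale c u0) r | c r. c \<in> valuation_ring v \<and>
                                 r \<in> {x \<in> W. x i = 0} \<inter> std_lattice (valuation_ring v)}"
    (is "?L = ?R")
proof
  have "is_O_submodule (valuation_ring v) ?L"
    using is_O_submodule_Int[OF is_O_submodule_if_K_subspace[OF W] is_O_submodule_std_lattice] .
  then show "?R \<subseteq> ?L" using u0 unfolding is_O_submodule_def by blast
next
  show "?L \<subseteq> ?R"
  proof
    fix u assume u: "u \<in> ?L"
    define c where "c = u i / u0 i"
    have c: "c \<in> valuation_ring v"
      unfolding c_def using min[OF u] u0(2) by (intro divide_in_valuation_ring) auto
    define r where "r = vadd u (vscale (- c) u0)"
    have "r \<in> W" using W u u0 unfolding r_def is_K_subspace_def by blast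
    moreover have "r i = 0" using u0(2) by (simp add: r_def vadd_def vscale_def c_def)
    moreover have "r \<in> std_lattice (valuation_ring v)"
      using u u0 c by (auto simp: r_def vadd_def vscale_def std_lattice_def
          intro!: diff_in_valuation_ring mult_in_valuation_ring)
    moreover have "u = vadd (vscale c u0) r" by (simp add: r_def vadd_def vscale_def)
    ultimately show "u \<in> ?R" using c by blast
  qed
qed

lemma K_subspace_Int_std_lattice_generated:
  fixes W :: "('n::finite \<Rightarrow> 'k) set"
  assumes "is_K_subspace W"
  shows "\<exists>gs. length gs \<le> subspace_dim W \<and>
           W \<inter> std_lattice (valuation_ring v) = O_span (valuation_ring v) gs"
  using assms
proof (induction "subspace_dim W" arbitrary: W rule: less_induct)
  case less
  let ?L = "std_lattice (valuation_ring v) :: ('n \<Rightarrow> 'k) set"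
  show ?case
  proof (cases "W = {vzero}")
    case True
    then have "W \<inter> ?L = O_span (valuation_ring v) []"
      using vzero_in_std_lattice by (auto simp: O_span_Nil)
    then show ?thesis by (intro exI[of _ "[]"]) simp
  next
    case False
    then obtain w where w: "w \<in> W" "w \<noteq> vzero"
      using less.prems by (auto simp: is_K_subspace_def)
    obtain i where i: "w i \<noteq> 0" "vscale (inverse (w i)) w \<in> ?L"
      using exists_scaled_into_std_lattice[OF w(2)] by blast
    have "vscale (inverse (w i)) w \<in> W \<inter> ?L"
      using less.prems w(1) i(2) by (simp add: is_K_subspace_def)
    then obtain u0 where u0: "u0 \<in> W \<inter> ?L" "u0 i \<noteq> 0"
        and min: "\<And>u. u \<in> W \<inter> ?L \<Longrightarrow> u i \<noteq> 0 \<Longrightarrow> v (u0 i) \<le> v (u i)"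
      by (rule obtain_min_valuation_coordinate) (use i(1) in \<open>auto simp: vscale_def\<close>)
    define W' where "W' = {x \<in> W. x i = 0}"
    have W': "is_K_subspace W'"
      using less.prems unfolding W'_def is_K_subspace_def vzero_def vadd_def vscale_def by auto
    moreover have "W' \<subset> W" using u0 by (auto simp: W'_def)
    ultimately have dim: "subspace_dim W' < subspace_dim W"
      by (rule subspace_dim_strict_mono[OF _ less.prems])
    then obtain gs where gs: "length gs \<le> subspace_dim W'" "W' \<inter> ?L = O_span (valuation_ring v) gs"
      using less.hyps W' by blast
    have "W \<inter> ?L = {vadd (vscale c u0) r | c r. c \<in> valuation_ring v \<and> r \<in> W' \<inter> ?L}"
      unfolding W'_def using less.prems u0 min by (rule K_subspace_Int_std_lattice_split)
    then have "W \<inter> ?L = O_span (valuation_ring v) (u0 # gs)"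
      by (simp only: O_span_Cons gs(2))
    moreover have "length (u0 # gs) \<le> subspace_dim W" using gs(1) dim by simp
    ultimately show ?thesis by blast
  qed
qed

lemma Int_std_lattice_in_lattice_poset:
  fixes W :: "('n::finite \<Rightarrow> 'k) set"
  assumes \<pi>: "v \<pi> = 1" and W: "W \<in> tits_building"
  shows "W \<inter> std_lattice (valuation_ring v) \<in> lattice_poset (valuation_ring v) \<pi>"
proof -
  let ?L = "std_lattice (valuation_ring v) :: ('n \<Rightarrow> 'k) set"
  have sub: "is_K_subspace W" and "W \<noteq> {vzero}" "W \<noteq> UNIV"
    using W by (auto simp: tits_building_def)
  then obtain w where w: "w \<in> W" "w \<noteq> vzero" by (auto simp: is_K_subspace_def)
  obtain i where i: "w i \<noteq> 0" "vscale (inverse (w i)) w \<in> ?L"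
    using exists_scaled_into_std_lattice[OF w(2)] by blast
  have "\<not> W \<inter> ?L \<subseteq> vscale \<pi> ` ?L"
  proof
    assume "W \<inter> ?L \<subseteq> vscale \<pi> ` ?L"
    moreover have "vscale (inverse (w i)) w \<in> W \<inter> ?L"
      using sub w(1) i(2) by (simp add: is_K_subspace_def)
    ultimately obtain y where "y \<in> ?L" "vscale (inverse (w i)) w = vscale \<pi> y" by blast
    then have "1 = \<pi> * y i" "y i \<in> valuation_ring v"
      using i(1) by (auto simp: vscale_def std_lattice_def fun_eq_iff dest: spec[of _ i])
    then show False using one_neq_uniformizer_mult[OF \<pi>] by blast
  qed
  moreover obtain gs where "length gs \<le> subspace_dim W" "W \<inter> ?L = O_span (valuation_ring v) gs"
    using K_subspace_Int_std_lattice_generated[OF sub] by blast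
  moreover have "subspace_dim W < CARD('n)" using subspace_dim_less_card[OF sub \<open>W \<noteq> UNIV\<close>] .
  ultimately show ?thesis
    using is_O_submodule_Int[OF is_O_submodule_if_K_subspace[OF sub] is_O_submodule_std_lattice]
    unfolding lattice_poset_def by (auto intro!: exI[of _ gs])
qed

text \<open>Of two multiples \<open>c\<^sub>1 u\<^sub>1, c\<^sub>2 u\<^sub>2\<close> the one of smaller valuation absorbs the other:
  \<open>c\<^sub>1 u\<^sub>1 + c\<^sub>2 u\<^sub>2 = c\<^sub>1 (u\<^sub>1 + (c\<^sub>2/c\<^sub>1) u\<^sub>2)\<close> with \<open>c\<^sub>2/c\<^sub>1 \<in> O\<close>.\<close>
lemma is_K_subspace_K_span:
  assumes U: "is_O_submodule (valuation_ring v) U"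
  shows "is_K_subspace (K_span U)"
proof -
  have absorb: "vadd (vscale c1 u1) (vscale c2 u2) \<in> K_span U"
    if "u1 \<in> U" "u2 \<in> U" "c1 \<noteq> 0" "c2 = 0 \<or> v c1 \<le> v c2" for c1 c2 u1 u2
  proof -
    have "c2 / c1 \<in> valuation_ring v" using that by (intro divide_in_valuation_ring) auto
    then have "vadd u1 (vscale (c2 / c1) u2) \<in> U" using U that unfolding is_O_submodule_def by blast
    moreover have "vadd (vscale c1 u1) (vscale c2 u2) = vscale c1 (vadd u1 (vscale (c2 / c1) u2))"
      using that(3) by (simp add: vadd_def vscale_def fun_eq_iff field_simps)
    ultimately show ?thesis unfolding K_span_def by blast
  qed
  have "vadd (vscale c1 u1) (vscale c2 u2) \<in> K_span U" if "u1 \<in> U" "u2 \<in> U" for c1 c2 u1 u2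
  proof (cases "c1 = 0 \<and> c2 = 0")
    case True
    then have "vadd (vscale c1 u1) (vscale c2 u2) = vscale 0 u1" by (simp add: vadd_def vscale_def)
    then show ?thesis using that unfolding K_span_def by blast
  next
    case False
    then consider "c1 \<noteq> 0" "c2 = 0 \<or> v c1 \<le> v c2" | "c2 \<noteq> 0" "c1 = 0 \<or> v c2 \<le> v c1" by linarith
    then show ?thesis
    proof cases
      case 1 then show ?thesis using absorb that by blast
    next
      case 2
      then have "vadd (vscale c2 u2) (vscale c1 u1) \<in> K_span U" using absorb that by blast
      then show ?thesis by (simp add: vadd_def add.commute)
    qed
  qed
  moreover have "vzero \<in> K_span U"
    using U subset_K_span unfolding is_O_submodule_def by blast
  moreover have "vscale c x \<in> K_span U" if x: "x \<in> K_span U" for c x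
  proof -
    obtain c' u where "x = vscale c' u" "u \<in> U" using x unfolding K_span_def by blast
    moreover have "vscale c (vscale c' u) = vscale (c * c') u" by (simp add: vscale_def mult.assoc)
    ultimately show ?thesis unfolding K_span_def by blast
  qed
  ultimately show ?thesis unfolding is_K_subspace_def K_span_def by blast
qed

lemma K_span_in_tits_building:
  fixes U :: "('n::finite \<Rightarrow> 'k) set"
  assumes U: "U \<in> lattice_poset (valuation_ring v) \<pi>"
  shows "K_span U \<in> tits_building"
proof -
  let ?L = "std_lattice (valuation_ring v) :: ('n \<Rightarrow> 'k) set"
  have mod: "is_O_submodule (valuation_ring v) U" and not_pi: "\<not> U \<subseteq> vscale \<pi> ` ?L"
    using U by (auto simp: lattice_poset_def)
  obtain gs where gs: "length gs \<le> CARD('n) - 1" "U = O_span (valuation_ring v) gs"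
    using U by (auto simp: lattice_poset_def)
  have "0 < CARD('n)" by simp
  then have "length gs < CARD('n)" using gs(1) by linarith
  then have "K_span U \<noteq> UNIV" using K_span_O_span_neq_UNIV gs(2) by blast
  moreover have "K_span U \<noteq> {vzero}"
  proof
    assume "K_span U = {vzero}"
    then have "U \<subseteq> {vscale \<pi> vzero}"
      using subset_K_span[of U] by (simp add: vscale_def vzero_def)
    then show False using not_pi vzero_in_std_lattice by blast
  qed
  ultimately show ?thesis using is_K_subspace_K_span[OF mod] by (simp add: tits_building_def)
qed

lemma K_span_Int_std_lattice:
  fixes W :: "('n::finite \<Rightarrow> 'k) set"
  assumes W: "is_K_subspace W"
  shows "K_span (W \<inter> std_lattice (valuation_ring v)) = W"
proof
  show "K_span (W \<inter> std_lattice (valuation_ring v)) \<subseteq> W"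
    using W unfolding K_span_def is_K_subspace_def by blast
  show "W \<subseteq> K_span (W \<inter> std_lattice (valuation_ring v))"
  proof
    fix w assume w: "w \<in> W"
    show "w \<in> K_span (W \<inter> std_lattice (valuation_ring v))"
    proof (cases "w = vzero")
      case True
      then show ?thesis using w vzero_in_std_lattice subset_K_span by blast
    next
      case False
      then obtain i where i: "w i \<noteq> 0" "vscale (inverse (w i)) w \<in> std_lattice (valuation_ring v)"
        by (rule exists_scaled_into_std_lattice)
      moreover have "vscale (inverse (w i)) w \<in> W" using W w by (simp add: is_K_subspace_def)
      moreover have "w = vscale (w i) (vscale (inverse (w i)) w)"
        using i(1) by (simp add: vscale_def fun_eq_iff)
      ultimately show ?thesis unfolding K_span_def by blast
    qed
  qed
qed

end

theorem mainTheorem12: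
  fixes v :: "'k::field_char_0 \<Rightarrow> int" and \<pi> :: 'k
  assumes "p_adic_local_field v"
    and "\<pi> \<noteq> 0" and "v \<pi> = 1"
  defines "OK \<equiv> valuation_ring v"
  defines "\<psi> \<equiv> (\<lambda>W::('n::finite \<Rightarrow> 'k) set. W \<inter> std_lattice OK)"
  defines "F \<equiv> realization_map \<psi>"
  shows "(\<forall>W\<in>tits_building. \<psi> W \<in> lattice_poset OK \<pi>) \<and>
         (\<forall>W1\<in>tits_building. \<forall>W2\<in>tits_building. W1 \<subseteq> W2 \<longrightarrow> \<psi> W1 \<subseteq> \<psi> W2) \<and>
         continuous_map (order_complex tits_building (\<subseteq>))
                        (order_complex (lattice_poset OK \<pi>) (\<subseteq>)) F \<and>
         (\<exists>G. continuous_map (order_complex (lattice_poset OK \<pi>) (\<subseteq>))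
                             (order_complex tits_building (\<subseteq>)) G \<and>
              homotopic_with (\<lambda>x. True) (order_complex tits_building (\<subseteq>))
                 (order_complex tits_building (\<subseteq>)) (G \<circ> F) id \<and>
              homotopic_with (\<lambda>x. True) (order_complex (lattice_poset OK \<pi>) (\<subseteq>))
                 (order_complex (lattice_poset OK \<pi>) (\<subseteq>)) (F \<circ> G) id)"
proof -
  interpret discrete_valuation v
    using assms(1) by unfold_locales (simp add: p_adic_local_field_def)
  let ?T = "tits_building :: ('n \<Rightarrow> 'k) set set"
  let ?L = "lattice_poset OK \<pi> :: ('n \<Rightarrow> 'k) set set"
  let ?G = "realization_map (K_span :: ('n \<Rightarrow> 'k) set \<Rightarrow> _)"
  have \<psi>_in: "\<forall>W\<in>?T. \<psi> W \<in> ?L"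
    unfolding assms(4,5) using Int_std_lattice_in_lattice_poset[OF assms(3)] by blast
  have \<psi>_mono: "\<forall>W1\<in>?T. \<forall>W2\<in>?T. W1 \<subseteq> W2 \<longrightarrow> \<psi> W1 \<subseteq> \<psi> W2"
    by (auto simp: assms(5))
  have span_in: "\<And>U. U \<in> ?L \<Longrightarrow> K_span U \<in> ?T"
    unfolding assms(4) using K_span_in_tits_building by blast
  have span_mono: "\<And>U U'. U \<subseteq> U' \<Longrightarrow> K_span U \<subseteq> (K_span U' :: ('n \<Rightarrow> 'k) set)"
    by (rule K_span_mono)
  have span_\<psi>: "\<And>W. W \<in> ?T \<Longrightarrow> K_span (\<psi> W) = W"
    unfolding assms(4,5) tits_building_def using K_span_Int_std_lattice by blast
  have \<psi>_span: "\<And>U. U \<in> ?L \<Longrightarrow> U \<subseteq> \<psi> (K_span U)"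
    using subset_K_span by (auto simp: assms(5) lattice_poset_def)
  have "continuous_map (order_complex ?T (\<subseteq>)) (order_complex ?L (\<subseteq>)) F"
    unfolding assms(6) by (rule continuous_map_realization_map) (use \<psi>_in \<psi>_mono in auto)
  moreover have "continuous_map (order_complex ?L (\<subseteq>)) (order_complex ?T (\<subseteq>)) ?G"
    by (rule continuous_map_realization_map) (use span_in span_mono in auto)
  moreover have
    "homotopic_with (\<lambda>x. True) (order_complex ?T (\<subseteq>)) (order_complex ?T (\<subseteq>)) (?G \<circ> F) id"
    "homotopic_with (\<lambda>x. True) (order_complex ?L (\<subseteq>)) (order_complex ?L (\<subseteq>)) (F \<circ> ?G) id"
    using realization_maps_homotopy_inverse[of ?T \<psi> ?L K_span]
      \<psi>_in \<psi>_mono span_in span_mono span_\<psi> \<psi>_span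
    unfolding assms(6) by auto
  ultimately show ?thesis using \<psi>_in \<psi>_mono by blast
qed

end
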